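(* Let $\mathbf{q}$ be any point on the line $\mathcal{L}$ satisfying $q_{\min} \leq q_{d} \leq q_{\max}$, and define \[ \mu(\mathbf{q}) := 1-\frac{(q_d-q_{\min})(1-\overline{\mu})}{q_{\max}-q_{\min}} ~. \] Then $\mu(\mathbf{q})\geq\overline{\mu}$, and the reduced convex hull of $\mathcal{P}^-$ is exactly equal to the following non-empty line segment of $\mathcal{L}$: \[ \mathrm{conv}_{\mu(\mathbf{q})}(\mathcal{P}^-) = \left[\mathbf{q},\mathbf{u}_{\mathrm{left}}+\mathbf{u}_{\mathrm{right}}-\mathbf{q}\right] \subseteq \{\mathbf{x}\in\mathcal{L} : x_d \geq q_{d}\} . \]
   Context: Let $\mathcal{S}:=\{\mathbf{x}\in\mathbb{R}^d: x_1=\ldots=x_{d-2}=0\}$ and $\mathcal{L}:=\{(0,\ldots,0,2,y)^T:y\in\mathbb{R}\}\subseteq\mathcal{S}$. For a finite point set $\mathcal{P}$ and $\frac{1}{|\mathcal{P}|}\le\mu\le1$, the reduced convex hull is $\mathrm{conv}_\mu(\mathcal{P}):=\{\sum_{p\in\mathcal{P}}\alpha_p p: 0\le\alpha_p\le\mu,\ \sum_p\alpha_p=1\}$. In the construction, $\overline{\mu}$ is a constant with $\frac12\le\overline{\mu}<1$ (defined as $\max\{\frac12,\max_{\sigma}\mu_\sigma^{(\delta)}\}$, the maximum over $\sigma\in\{-1,1\}^d$ with $\sigma_{d-1}=\sigma_d=1$ of the largest coefficient in the unique convex combination of the point $\mathbf{p}_\sigma^{(\delta)}$ in terms of vertices of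 the stretched dual Goldfarb cube), and $q_{\min}<q_{\max}$ are finite reals (the minimum and maximum of the last coordinates $q_{\sigma,d}$ of the constructed points $\mathbf{q}_\sigma\in\mathcal{L}$ over those $\sigma$). The second point class is $\mathcal{P}^-:=\{\mathbf{u}_{\mathrm{left}},\mathbf{u}_{\mathrm{right}}\}$ with $\mathbf{u}_{\mathrm{left}}:=(0,\ldots,0,2,q_{\min})^T$ and $\mathbf{u}_{\mathrm{right}}:=(0,\ldots,0,2,q_{\min}+\frac{q_{\max}-q_{\min}}{1-\overline{\mu}})^T$. *)

theory Defs
  imports "HOL-Analysis.Analysis"
begin

text \<open>Points of R^d are vectors of type real^'n (d = CARD('n)). The coordinates
  d-1 and d are represented by two distinct indices ip (penultimate) and il (last);
  all other indices play the role of coordinates 1..d-2.\<close>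

definition conv_mu :: "real \<Rightarrow> 'a::real_vector set \<Rightarrow> 'a set" where
  "conv_mu \<mu> P = {(\<Sum>p\<in>P. \<alpha> p *\<^sub>R p) | \<alpha>.
      (\<forall>p\<in>P. 0 \<le> \<alpha> p \<and> \<alpha> p \<le> \<mu>) \<and> sum \<alpha> P = 1}"

definition Lpt :: "'n::finite \<Rightarrow> 'n \<Rightarrow> real \<Rightarrow> real^'n" where
  "Lpt ip il y = (\<chi> i. if i = ip then 2 else if i = il then y else 0)"

definition Lline :: "'n::finite \<Rightarrow> 'n \<Rightarrow> (real^'n) set" where
  "Lline ip il = {Lpt ip il y | y. True}"

definition u_left :: "'n::finite \<Rightarrow> 'n \<Rightarrow> real \<Rightarrow> real^'n" where
  "u_left ip il qmin = Lpt ip il qmin"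

definition u_right :: "'n::finite \<Rightarrow> 'n \<Rightarrow> real \<Rightarrow> real \<Rightarrow> real \<Rightarrow> real^'n" where
  "u_right ip il qmin qmax mubar = Lpt ip il (qmin + (qmax - qmin) / (1 - mubar))"

definition mu_q :: "real \<Rightarrow> real \<Rightarrow> real \<Rightarrow> real \<Rightarrow> real" where
  "mu_q qmin qmax mubar qd = 1 - (qd - qmin) * (1 - mubar) / (qmax - qmin)"

end

theory Submission
  imports Defs
begin

text \<open>The \<open>\<mu>\<close>-reduced hull of two distinct points \<open>a, b\<close> consists of the combinations
  \<open>(1 - t) a + t b\<close> whose two weights both lie in \<open>[0, \<mu>]\<close>, i.e. \<open>1 - \<mu> \<le> t \<le> \<mu>\<close>; for
  \<open>\<mu> \<ge> 1/2\<close> this is the segment from \<open>\<mu> a + (1 - \<mu>) b\<close> to its reflection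
  \<open>a + b - (\<mu> a + (1 - \<mu>) b)\<close>. The formula for \<open>\<mu>(q)\<close> is chosen exactly so that
  \<open>q = \<mu>(q) u_left + (1 - \<mu>(q)) u_right\<close>, and \<open>\<mu>(q) \<ge> \<mu>bar\<close> because \<open>q_d \<le> q_max\<close>.
  Since \<open>u_right\<close> lies beyond \<open>u_left\<close> on \<open>\<L>\<close>, the segment runs from \<open>q\<close> towards larger
  last coordinates.\<close>

lemma closed_segment_affine_param:
  fixes a b :: "'a::real_vector"
  shows "closed_segment ((1 - s) *\<^sub>R a + s *\<^sub>R b) ((1 - r) *\<^sub>R a + r *\<^sub>R b)
       = (\<lambda>t. (1 - t) *\<^sub>R a + t *\<^sub>R b) ` closed_segment s r"
proof -
  have param: "(1 - t) *\<^sub>R a + t *\<^sub>R b = a + t *\<^sub>R (b - a)" for t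
    by (simp add: algebra_simps)
  have "closed_segment (s *\<^sub>R (b - a)) (r *\<^sub>R (b - a))
      = (\<lambda>t. t *\<^sub>R (b - a)) ` closed_segment s r"
    using closed_segment_linear_image[OF linear_scaleR_left] .
  then show ?thesis
    unfolding param closed_segment_translation by (simp add: image_image)
qed

lemma conv_mu_doubleton_eq_image:
  fixes a b :: "'a::real_vector"
  assumes "a \<noteq> b" and "\<mu> \<le> 1"
  shows "conv_mu \<mu> {a, b} = (\<lambda>t. (1 - t) *\<^sub>R a + t *\<^sub>R b) ` {1 - \<mu>..\<mu>}"
proof (intro set_eqI iffI)
  fix x assume "x \<in> conv_mu \<mu> {a, b}"
  then obtain \<alpha> where x: "x = \<alpha> a *\<^sub>R a + \<alpha> b *\<^sub>R b"
    and bounds: "0 \<le> \<alpha> a" "\<alpha> a \<le> \<mu>" "0 \<le> \<alpha> b" "\<alpha> b \<le> \<mu>"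
    and sum1: "\<alpha> a + \<alpha> b = 1"
    using assms by (auto simp: conv_mu_def)
  have "x = (1 - \<alpha> b) *\<^sub>R a + \<alpha> b *\<^sub>R b"
    using x sum1 by (simp add: eq_diff_eq)
  moreover have "\<alpha> b \<in> {1 - \<mu>..\<mu>}"
    using bounds sum1 by simp
  ultimately show "x \<in> (\<lambda>t. (1 - t) *\<^sub>R a + t *\<^sub>R b) ` {1 - \<mu>..\<mu>}"
    by blast
next
  fix x assume "x \<in> (\<lambda>t. (1 - t) *\<^sub>R a + t *\<^sub>R b) ` {1 - \<mu>..\<mu>}"
  then obtain t where t: "1 - \<mu> \<le> t" "t \<le> \<mu>" and x: "x = (1 - t) *\<^sub>R a + t *\<^sub>R b"
    by auto
  define \<alpha> where "\<alpha> p = (if p = a then 1 - t else t)" for p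
  have "x = (\<Sum>p\<in>{a, b}. \<alpha> p *\<^sub>R p)" "sum \<alpha> {a, b} = 1"
    "\<forall>p\<in>{a, b}. 0 \<le> \<alpha> p \<and> \<alpha> p \<le> \<mu>"
    using assms t x by (auto simp: \<alpha>_def)
  then show "x \<in> conv_mu \<mu> {a, b}"
    unfolding conv_mu_def by blast
qed

lemma conv_mu_doubleton:
  fixes a b :: "'a::real_vector"
  assumes "a \<noteq> b" and "1/2 \<le> \<mu>" and "\<mu> \<le> 1"
  shows "conv_mu \<mu> {a, b} = closed_segment (\<mu> *\<^sub>R a + (1 - \<mu>) *\<^sub>R b) ((1 - \<mu>) *\<^sub>R a + \<mu> *\<^sub>R b)"
proof -
  have "closed_segment (1 - \<mu>) \<mu> = {1 - \<mu>..\<mu>}"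
    using assms(2) by (simp add: closed_segment_eq_real_ivl)
  then show ?thesis
    using closed_segment_affine_param[of "1 - \<mu>" a b \<mu>] conv_mu_doubleton_eq_image[OF assms(1,3)]
    by simp
qed

lemma Lpt_affine:
  assumes "s + t = 1"
  shows "s *\<^sub>R Lpt ip il y + t *\<^sub>R Lpt ip il z = Lpt ip il (s * y + t * z)"
  using assms by (auto simp: vec_eq_iff Lpt_def algebra_simps)

lemma Lpt_nth_last: "ip \<noteq> il \<Longrightarrow> Lpt ip il y $ il = y"
  by (simp add: Lpt_def)

lemma Lpt_add_diff: "Lpt ip il x + Lpt ip il z - Lpt ip il y = Lpt ip il (x + z - y)"
  by (auto simp: vec_eq_iff Lpt_def)

lemma Lpt_closed_segment:
  "closed_segment (Lpt ip il y) (Lpt ip il z) = Lpt ip il ` closed_segment y z"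
proof -
  have param: "(1 - w) *\<^sub>R Lpt ip il 0 + w *\<^sub>R Lpt ip il 1 = Lpt ip il w" for w
    by (simp add: Lpt_affine)
  show ?thesis
    using closed_segment_affine_param[of y "Lpt ip il 0" "Lpt ip il 1" z]
    unfolding param by simp
qed

lemma mu_q_bounds:
  assumes "qmin < qmax" and "mubar < 1" and "qmin \<le> qd" and "qd \<le> qmax"
  shows "mubar \<le> mu_q qmin qmax mubar qd" and "mu_q qmin qmax mubar qd \<le> 1"
proof -
  have "(qd - qmin) * (1 - mubar) / (qmax - qmin)
      \<le> (qmax - qmin) * (1 - mubar) / (qmax - qmin)"
    using assms by (intro divide_right_mono mult_right_mono) auto
  also have "\<dots> = 1 - mubar"
    using assms by simp
  finally show "mubar \<le> mu_q qmin qmax mubar qd"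
    by (simp add: mu_q_def)
  show "mu_q qmin qmax mubar qd \<le> 1"
    using assms by (simp add: mu_q_def)
qed

lemma mu_q_weight:
  assumes "qmin < qmax" and "mubar < 1"
  shows "qmin + (1 - mu_q qmin qmax mubar qd) * ((qmax - qmin) / (1 - mubar)) = qd"
  using assms by (simp add: mu_q_def)

lemma conv_mu_Lpt_pair:
  assumes "ip \<noteq> il" and "0 < D" and "1/2 \<le> \<mu>" and "\<mu> \<le> 1"
  shows "conv_mu \<mu> {Lpt ip il a, Lpt ip il (a + D)}
       = Lpt ip il ` {a + (1 - \<mu>) * D..a + \<mu> * D}"
proof -
  have "Lpt ip il a $ il \<noteq> Lpt ip il (a + D) $ il"
    using assms(1,2) by (simp add: Lpt_nth_last)
  then have distinct: "Lpt ip il a \<noteq> Lpt ip il (a + D)"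
    by auto
  have "\<mu> * a + (1 - \<mu>) * (a + D) = a + (1 - \<mu>) * D"
    by (simp add: algebra_simps)
  then have left: "\<mu> *\<^sub>R Lpt ip il a + (1 - \<mu>) *\<^sub>R Lpt ip il (a + D) = Lpt ip il (a + (1 - \<mu>) * D)"
    using Lpt_affine[of \<mu> "1 - \<mu>" ip il a "a + D"] by simp
  have "(1 - \<mu>) * a + \<mu> * (a + D) = a + \<mu> * D"
    by (simp add: algebra_simps)
  then have right: "(1 - \<mu>) *\<^sub>R Lpt ip il a + \<mu> *\<^sub>R Lpt ip il (a + D) = Lpt ip il (a + \<mu> * D)"
    using Lpt_affine[of "1 - \<mu>" \<mu> ip il a "a + D"] by simp
  have "(1 - \<mu>) * D \<le> \<mu> * D"
    using assms(2,3) by (intro mult_right_mono) auto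
  then show ?thesis
    using conv_mu_doubleton[OF distinct assms(3,4)]
    by (simp add: left right Lpt_closed_segment closed_segment_eq_real_ivl)
qed

theorem lemma6:
  fixes ip il :: "'n::finite" and mubar qmin qmax :: real and q :: "real^'n"
  assumes "ip \<noteq> il"
    and "1/2 \<le> mubar" and "mubar < 1"
    and "qmin < qmax"
    and "q \<in> Lline ip il"
    and "qmin \<le> q $ il" and "q $ il \<le> qmax"
  shows "mu_q qmin qmax mubar (q $ il) \<ge> mubar
    \<and> conv_mu (mu_q qmin qmax mubar (q $ il))
          {u_left ip il qmin, u_right ip il qmin qmax mubar}
        = closed_segment q (u_left ip il qmin + u_right ip il qmin qmax mubar - q)
    \<and> closed_segment q (u_left ip il qmin + u_right ip il qmin qmax mubar - q) \<noteq> {}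
    \<and> closed_segment q (u_left ip il qmin + u_right ip il qmin qmax mubar - q)
        \<subseteq> {x \<in> Lline ip il. x $ il \<ge> q $ il}"
proof -
  obtain y where q: "q = Lpt ip il y"
    using assms(5) by (auto simp: Lline_def)
  have y: "q $ il = y"
    using q assms(1) by (simp add: Lpt_nth_last)
  define \<mu> where "\<mu> = mu_q qmin qmax mubar y"
  define D where "D = (qmax - qmin) / (1 - mubar)"
  have \<mu>: "mubar \<le> \<mu>" "\<mu> \<le> 1"
    using mu_q_bounds assms y unfolding \<mu>_def by auto
  have D: "D > 0" and weight: "qmin + (1 - \<mu>) * D = y"
    using assms mu_q_weight unfolding D_def \<mu>_def by auto
  have nonempty: "y \<le> qmin + \<mu> * D"
    using weight mult_right_mono[of "1 - \<mu>" \<mu> D] \<mu> assms(2) D by auto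
  moreover have "u_left ip il qmin + u_right ip il qmin qmax mubar - q = Lpt ip il (qmin + \<mu> * D)"
    unfolding u_left_def u_right_def q Lpt_add_diff
    using weight by (simp add: algebra_simps flip: D_def)
  ultimately have segment: "closed_segment q (u_left ip il qmin + u_right ip il qmin qmax mubar - q)
      = Lpt ip il ` {y..qmin + \<mu> * D}"
    by (simp add: q Lpt_closed_segment closed_segment_eq_real_ivl)
  have "conv_mu \<mu> {u_left ip il qmin, u_right ip il qmin qmax mubar} = Lpt ip il ` {y..qmin + \<mu> * D}"
    using conv_mu_Lpt_pair[OF assms(1) D, of \<mu> qmin] \<mu> assms(2) weight
    by (simp add: u_left_def u_right_def flip: D_def)
  moreover have "Lpt ip il ` {y..qmin + \<mu> * D} \<subseteq> {x \<in> Lline ip il. x $ il \<ge> y}"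
    using assms(1) by (auto simp: Lline_def Lpt_nth_last)
  ultimately show ?thesis
    using \<mu> segment nonempty by (simp add: y flip: \<mu>_def)
qed

end
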